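(* Let $d \geq 2$, $n$, $k$ and $j$ be positive integers with $k \leq n$, and suppose that either ($n \geq 2k$ and $j < k$) or ($n < 2k$ and $j < n-k$). Then there exist a point set $P \subseteq [0,1]^d$ with $|P| = n$ and a subset $S \subseteq P$ with $|S| = k$ such that $S$ is a local minimum of the $k$-SDSSP-$j$ problem on $P$ (i.e., no $j$-swap applied to $S$ yields a $k$-subset of $P$ with strictly smaller $L_\infty$ star discrepancy), but $S$ is not a global minimum (i.e., there is a subset $S' \subseteq P$ with $|S'| = k$ and $d_\infty^*(S') < d_\infty^*(S)$).
   Context: For a finite point set $Q \subseteq [0,1]^d$, its $L_\infty$ star discrepancy is $d_\infty^*(Q) := \sup_{q \in [0,1]^d} \left| \frac{|Q \cap [0,q)|}{|Q|} - \lambda([0,q)) \right|$, where $[0,q) = [0,q_1) \times \cdots \times [0,q_d)$ and $\lambda$ denotes Lebesgue measure. Given a point set $P \subseteq [0,1]^d$ with $|P| = n$ and a subset $S \subseteq P$ with $|S| = k$, a $j$-swap replaces $S$ by $(S \setminus A) \cup B$ where $A \subseteq S$ and $B \subseteq P \setminus S$ with $|A| = |B| = j$ (i.e., $j$ points of $S$ are simultaneously replaced by $j$ points of $P$ not in $S$). The $k$-SDSSP-$j$ problem is the problem of obtaining a subset of $P$ of size $k$ of minimal $L_\infty$ star discrepancy by only performing improving $j$-swaps (swaps that strictly decrease the star discrepancy); a local minimum of this problem is a $k$-subset from which no $j$-swap strictly decreases the star discrepancy, and a global minimum is a $k$-subset whose star discrepancy is minimal among all $k$-subsets of $P$. *)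

theory Defs
  imports "HOL-Analysis.Analysis"
begin

text \<open>The unit cube [0,1]^d, with d = CARD('n).\<close>
definition unit_cube :: "(real ^ 'n) set" where
  "unit_cube = {x. \<forall>i. 0 \<le> x $ i \<and> x $ i \<le> 1}"

definition anchored_box :: "real ^ 'n \<Rightarrow> (real ^ 'n) set" where
  "anchored_box q = {x. \<forall>i. 0 \<le> x $ i \<and> x $ i < q $ i}"

definition star_discrepancy :: "(real ^ 'n) set \<Rightarrow> real" where
  "star_discrepancy Q = (SUP q\<in>unit_cube.
      \<bar>real (card (Q \<inter> anchored_box q)) / real (card Q) - measure lborel (anchored_box q)\<bar>)"

definition j_swap :: "(real ^ 'n) set \<Rightarrow> (real ^ 'n) set \<Rightarrow> nat \<Rightarrow> (real ^ 'n) set \<Rightarrow> bool" where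
  "j_swap P S j S' \<longleftrightarrow> (\<exists>A B. A \<subseteq> S \<and> B \<subseteq> P - S \<and> card A = j \<and> card B = j
                          \<and> S' = (S - A) \<union> B)"

definition local_min_SDSSP :: "(real ^ 'n) set \<Rightarrow> nat \<Rightarrow> nat \<Rightarrow> (real ^ 'n) set \<Rightarrow> bool" where
  "local_min_SDSSP P k j S \<longleftrightarrow> S \<subseteq> P \<and> card S = k \<and>
     (\<forall>S'. j_swap P S j S' \<longrightarrow> \<not> star_discrepancy S' < star_discrepancy S)"

definition global_min_SDSSP :: "(real ^ 'n) set \<Rightarrow> nat \<Rightarrow> (real ^ 'n) set \<Rightarrow> bool" where
  "global_min_SDSSP P k S \<longleftrightarrow> S \<subseteq> P \<and> card S = k \<and>
     (\<forall>S'. S' \<subseteq> P \<and> card S' = k \<longrightarrow> star_discrepancy S \<le> star_discrepancy S')"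

end

theory Submission
  imports Defs
begin

text \<open>
  Points with a coordinate equal to 1 lie in no anchored box \<open>[0,q)\<close> with \<open>q\<close> in the unit
  cube; such face points only dilute the empirical measure and are used to pad all sets to the
  prescribed sizes.

  For \<open>j + 2 \<le> k\<close>, place corners \<open>c\<^sub>0, ..., c\<^sub>j\<close> on the hyperbola \<open>xy = A\<close>,
  \<open>A = 1 - 1/(2k)\<close>, in the plane of two coordinates. The set \<open>S\<close> consists of the inner corners
  of the staircase through the \<open>c\<^sub>i\<close>; every box avoiding it has volume at most \<open>A\<close>, so its
  discrepancy is \<open>A\<close>. Below each corner \<open>c\<^sub>i\<close>, \<open>P\<close> contains a guard that lies in
  \<open>[0,c\<^sub>i)\<close> and in no other corner box. A \<open>j\<close>-swap adds at most \<open>j\<close> of the \<open>j + 1\<close>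
  guards, and a set missing the guard of \<open>c\<^sub>i\<close> leaves the box \<open>[0,c\<^sub>i)\<close> of volume \<open>A\<close>
  empty. The guards themselves have discrepancy below \<open>A\<close>, as the staircase through them stays
  strictly below the hyperbola.

  For \<open>j = k - 1\<close>, all points of \<open>P\<close> outside \<open>S\<close> are face points, so every \<open>j\<close>-swap
  keeps a single point of \<open>S\<close>. If \<open>k \<ge> 3\<close>, \<open>S\<close> is a cluster of \<open>k - 1\<close> points near the
  origin together with a point near \<open>(1, ..., 1)\<close>; a swap result has at most one point in the
  box \<open>[0,1)\<^sup>d\<close>, hence discrepancy at least \<open>1 - 1/k\<close>, while keeping only the origin of the
  cluster improves on \<open>S\<close>. If \<open>k = 2\<close>, \<open>S\<close> is the origin and a face point, every swap result
  contains one of them and has discrepancy at least \<open>1/2\<close>, and two further diagonal points of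
  \<open>P\<close> form a better pair.
\<close>

section \<open>Anchored boxes and star discrepancy\<close>

abbreviation box_volume :: "real ^ 'n \<Rightarrow> real" where
  "box_volume q \<equiv> \<Prod>i\<in>UNIV. q $ i"

abbreviation box_fraction :: "(real ^ 'n) set \<Rightarrow> real ^ 'n \<Rightarrow> real" where
  "box_fraction Q q \<equiv> real (card (Q \<inter> anchored_box q)) / real (card Q)"

lemma anchored_box_sets: "anchored_box q \<in> sets lborel"
  unfolding anchored_box_def by measurable

lemma measure_anchored_box:
  assumes "\<And>i. 0 \<le> q $ i"
  shows "measure lborel (anchored_box q) = box_volume q"
proof -
  have between: "box 0 q \<subseteq> anchored_box q" "anchored_box q \<subseteq> cbox 0 q"
    by (auto simp: anchored_box_def mem_box_cart less_imp_le)
  have "0 \<in> cbox 0 q"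
    using assms by (simp add: mem_box_cart)
  then have "cbox 0 q \<noteq> {}"
    by blast
  then have cbox: "measure lborel (cbox 0 q) = box_volume q"
    using content_cbox_cart[of 0 q] by simp
  have "\<forall>b\<in>Basis. 0 \<bullet> b \<le> q \<bullet> b"
    using assms by (auto simp: Basis_vec_def cart_eq_inner_axis[symmetric])
  then have "measure lborel (box 0 q) = measure lborel (cbox 0 q)"
    by (simp add: content_cbox)
  moreover have "measure lborel (box 0 q) \<le> measure lborel (anchored_box q)"
    using between by (intro measure_mono_fmeasurable) (auto intro: fmeasurableI2[OF _ between(2)] anchored_box_sets)
  moreover have "measure lborel (anchored_box q) \<le> measure lborel (cbox 0 q)"
    using between anchored_box_sets by (intro measure_mono_fmeasurable) auto
  ultimately show ?thesis
    using cbox by linarith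
qed

lemma box_volume_le_prod_subset:
  assumes "q \<in> unit_cube"
  shows "box_volume q \<le> (\<Prod>i\<in>J. q $ i)"
proof -
  have "box_volume q = (\<Prod>i\<in>J. q $ i) * (\<Prod>i\<in>UNIV - J. q $ i)"
    by (simp add: prod.subset_diff[of J UNIV] mult.commute)
  also have "\<dots> \<le> (\<Prod>i\<in>J. q $ i) * 1"
    using assms by (intro mult_left_mono prod_le_1 prod_nonneg) (auto simp: unit_cube_def)
  finally show ?thesis
    by simp
qed

lemma box_volume_nonneg: "q \<in> unit_cube \<Longrightarrow> 0 \<le> box_volume q"
  by (auto simp: unit_cube_def intro: prod_nonneg)

lemma box_volume_le_1: "q \<in> unit_cube \<Longrightarrow> box_volume q \<le> 1"
  using box_volume_le_prod_subset[of q "{}"] by simp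

lemma box_volume_le_component: "q \<in> unit_cube \<Longrightarrow> box_volume q \<le> q $ i"
  using box_volume_le_prod_subset[of q "{i}"] by simp

lemma box_volume_le_two_components:
  "q \<in> unit_cube \<Longrightarrow> i \<noteq> i' \<Longrightarrow> box_volume q \<le> q $ i * q $ i'"
  using box_volume_le_prod_subset[of q "{i, i'}"] by simp

lemma box_volume_ge_power:
  fixes q :: "real ^ 'n"
  assumes "\<And>i. c \<le> q $ i" "0 \<le> c"
  shows "c ^ CARD('n) \<le> box_volume q"
  using prod_mono[of UNIV "\<lambda>_. c" "\<lambda>i. q $ i"] assms by simp

lemma box_volume_eq_0_if_origin_notin:
  assumes "q \<in> unit_cube" "0 \<notin> anchored_box q"
  shows "box_volume q = 0"
proof -
  obtain i where "q $ i \<le> 0"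
    using assms(2) by (auto simp: anchored_box_def not_less)
  then show ?thesis
    using box_volume_le_component[OF assms(1), of i] box_volume_nonneg[OF assms(1)] by linarith
qed

lemma vec_in_unit_cube: "0 \<le> c \<Longrightarrow> c \<le> 1 \<Longrightarrow> vec c \<in> unit_cube"
  by (simp add: unit_cube_def)

lemma vec_in_anchored_box: "0 \<le> c \<Longrightarrow> vec c \<in> anchored_box q \<longleftrightarrow> (\<forall>i. c < q $ i)"
  by (auto simp: anchored_box_def)

lemma box_volume_le_if_vec_notin:
  assumes "q \<in> unit_cube" "0 \<le> c" "vec c \<notin> anchored_box q"
  shows "box_volume q \<le> c"
  using assms box_volume_le_component[OF assms(1)] vec_in_anchored_box
  by (metis not_less order_trans)

lemma box_volume_ge_if_vec_in:
  "0 \<le> c \<Longrightarrow> vec c \<in> anchored_box q \<Longrightarrow> c ^ CARD('n) \<le> box_volume (q :: real ^ 'n)"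
  by (intro box_volume_ge_power) (auto simp: vec_in_anchored_box less_imp_le)

lemma face_point_notin_anchored_box:
  "q \<in> unit_cube \<Longrightarrow> x $ i = 1 \<Longrightarrow> x \<notin> anchored_box q"
  by (auto simp: unit_cube_def anchored_box_def not_less intro: exI[of _ i])

lemma box_fraction_nonneg: "0 \<le> box_fraction Q q"
  by simp

lemma box_fraction_le_1:
  assumes "finite Q"
  shows "box_fraction Q q \<le> 1"
proof -
  have "card (Q \<inter> anchored_box q) \<le> card Q"
    using assms by (intro card_mono) auto
  then show ?thesis
    by (cases "card Q = 0") (auto simp: divide_le_eq_1)
qed

lemma box_fraction_le: "card (Q \<inter> anchored_box q) \<le> m \<Longrightarrow> box_fraction Q q \<le> m / card Q"
  by (simp add: divide_right_mono)

lemma box_fraction_ge: "m \<le> card (Q \<inter> anchored_box q) \<Longrightarrow> m / card Q \<le> box_fraction Q q"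
  by (simp add: divide_right_mono)

lemma star_discrepancy_ge:
  assumes "finite Q" "q \<in> unit_cube"
  shows "\<bar>box_fraction Q q - box_volume q\<bar> \<le> star_discrepancy Q"
proof -
  have vol: "measure lborel (anchored_box p) = box_volume p" if "p \<in> unit_cube" for p
    using that by (intro measure_anchored_box) (simp add: unit_cube_def)
  have "\<bar>box_fraction Q p - box_volume p\<bar> \<le> 2" if "p \<in> unit_cube" for p
    using box_fraction_nonneg[of Q p] box_fraction_le_1[OF assms(1), of p]
      box_volume_nonneg[OF that] box_volume_le_1[OF that]
    unfolding abs_le_iff by (intro conjI; linarith)
  then have "bdd_above ((\<lambda>p. \<bar>box_fraction Q p - measure lborel (anchored_box p)\<bar>) ` unit_cube)"
    by (auto simp: vol intro!: bdd_aboveI2)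
  from cSUP_upper[OF assms(2) this] show ?thesis
    unfolding star_discrepancy_def vol[OF assms(2)] .
qed

lemma star_discrepancy_le:
  fixes Q :: "(real ^ 'n) set"
  assumes "\<And>q. q \<in> unit_cube \<Longrightarrow> \<bar>box_fraction Q q - box_volume q\<bar> \<le> B"
  shows "star_discrepancy Q \<le> B"
  unfolding star_discrepancy_def
proof (rule cSUP_least)
  show "unit_cube \<noteq> {}"
    by (auto simp: unit_cube_def intro!: exI[of _ 0])
next
  fix q :: "real ^ 'n"
  assume "q \<in> unit_cube"
  then show "\<bar>box_fraction Q q - measure lborel (anchored_box q)\<bar> \<le> B"
    using assms by (subst measure_anchored_box) (auto simp: unit_cube_def)
qed

lemma star_discrepancy_ge_empty_box:
  assumes "finite Q" "q \<in> unit_cube" "Q \<inter> anchored_box q = {}"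
  shows "box_volume q \<le> star_discrepancy Q"
  using star_discrepancy_ge[OF assms(1,2)] assms(3) by simp

lemma star_discrepancy_ge_origin:
  fixes Q :: "(real ^ 'n) set"
  assumes "finite Q" "0 \<in> Q"
  shows "1 / card Q \<le> star_discrepancy Q"
proof (rule field_le_epsilon)
  fix e :: real
  assume "0 < e"
  define r where "r = min e 1"
  have r: "0 < r" "r \<le> 1" "r \<le> e"
    using \<open>0 < e\<close> by (auto simp: r_def)
  then have box: "vec r \<in> unit_cube"
    by (simp add: vec_in_unit_cube)
  have "0 \<in> Q \<inter> anchored_box (vec r)"
    using assms(2) r by (simp add: anchored_box_def)
  then have "1 \<le> card (Q \<inter> anchored_box (vec r))"
    using assms(1) by (metis One_nat_def Suc_leI card_gt_0_iff empty_iff finite_Int)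
  then have "1 / card Q \<le> box_fraction Q (vec r)"
    by (simp add: divide_right_mono)
  moreover have "box_volume (vec r :: real ^ 'n) \<le> e"
    using box_volume_le_component[OF box] r by (metis order_trans vec_component)
  ultimately show "1 / card Q \<le> star_discrepancy Q + e"
    using abs_le_D1[OF star_discrepancy_ge[OF assms(1) box]] by linarith
qed

lemma star_discrepancy_ge_visible:
  assumes "finite Q"
  shows "1 - card (Q \<inter> anchored_box 1) / card Q \<le> star_discrepancy Q"
proof -
  have one: "(1 :: real ^ 'n) \<in> unit_cube"
    by (simp add: unit_cube_def)
  show ?thesis
    using star_discrepancy_ge[OF assms one] by (simp add: abs_le_iff)
qed

lemma box_fraction_le_face_point:
  assumes "finite Q" "x \<in> Q" "x $ i = 1" "q \<in> unit_cube"
  shows "box_fraction Q q \<le> 1 - 1 / card Q"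
proof -
  have "Q \<inter> anchored_box q \<subseteq> Q - {x}"
    using assms face_point_notin_anchored_box by blast
  then have "card (Q \<inter> anchored_box q) \<le> card Q - 1"
    using assms by (metis card_Diff_singleton card_mono finite_Diff)
  then have "real (card (Q \<inter> anchored_box q)) \<le> real (card Q) - 1"
    using assms by (metis One_nat_def card_gt_0_iff empty_iff of_nat_1 of_nat_diff Suc_leI of_nat_le_iff)
  then show ?thesis
    using assms by (cases "card Q = 0") (auto simp: field_simps)
qed

lemma star_discrepancy_ge_face_point:
  fixes Q :: "(real ^ 'n) set"
  assumes "finite Q" "x \<in> Q" "x $ i = 1"
  shows "1 / card Q \<le> star_discrepancy Q"
proof -
  have one: "(1 :: real ^ 'n) \<in> unit_cube"
    by (simp add: unit_cube_def)
  show ?thesis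
    using box_fraction_le_face_point[OF assms one] star_discrepancy_ge_visible[OF assms(1)] by linarith
qed

lemma box_volume_minus_fraction_le:
  assumes "finite Q" "q \<in> unit_cube" "Q \<inter> anchored_box q \<noteq> {}"
  shows "box_volume q - box_fraction Q q \<le> 1 - 1 / card Q"
proof -
  have "1 \<le> card (Q \<inter> anchored_box q)"
    using assms by (simp add: Suc_le_eq card_gt_0_iff)
  then have "1 / card Q \<le> box_fraction Q q"
    by (simp add: divide_right_mono)
  then show ?thesis
    using box_volume_le_1[OF assms(2)] by linarith
qed

lemma box_volume_minus_fraction_le_origin:
  assumes "finite Q" "0 \<in> Q" "q \<in> unit_cube"
  shows "box_volume q - box_fraction Q q \<le> 1 - 1 / card Q"
proof (cases "0 \<in> anchored_box q")
  case True
  then show ?thesis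
    using assms by (intro box_volume_minus_fraction_le) auto
next
  case False
  have "0 < card Q"
    using assms card_gt_0_iff by blast
  then have "1 / card Q \<le> 1"
    by simp
  moreover have "box_volume q = 0"
    using box_volume_eq_0_if_origin_notin[OF assms(3) False] .
  ultimately show ?thesis
    using box_fraction_nonneg[of Q q] by linarith
qed

lemma star_discrepancy_le_face_point:
  fixes Q :: "(real ^ 'n) set"
  assumes "finite Q" "x \<in> Q" "x $ i = 1"
    and "\<And>q. q \<in> unit_cube \<Longrightarrow> Q \<inter> anchored_box q = {} \<Longrightarrow> box_volume q \<le> B"
  shows "star_discrepancy Q \<le> max B (1 - 1 / card Q)"
proof (rule star_discrepancy_le)
  fix q :: "real ^ 'n"
  assume q: "q \<in> unit_cube"
  have "box_volume q - box_fraction Q q \<le> max B (1 - 1 / card Q)"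
  proof (cases "Q \<inter> anchored_box q = {}")
    case True
    then show ?thesis
      using assms(4)[OF q] by simp
  next
    case False
    then show ?thesis
      using box_volume_minus_fraction_le[OF assms(1) q] by fastforce
  qed
  then show "\<bar>box_fraction Q q - box_volume q\<bar> \<le> max B (1 - 1 / card Q)"
    using box_fraction_le_face_point[OF assms(1-3) q] box_volume_nonneg[OF q] by (simp add: abs_le_iff)
qed

lemma j_swap_cards:
  assumes "j_swap P S j X" "finite P" "S \<subseteq> P"
  shows "X \<subseteq> P" "card X = card S" "card (X - S) = j" "card (X \<inter> S) = card S - j"
proof -
  obtain A B where AB: "A \<subseteq> S" "B \<subseteq> P - S" "card A = j" "card B = j" "X = (S - A) \<union> B"
    using assms(1) unfolding j_swap_def by blast
  have finite_S: "finite S"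
    by (rule finite_subset[OF assms(3,2)])
  then have finite_A: "finite A"
    by (rule finite_subset[OF AB(1)])
  have finite_B: "finite B"
    using AB(2) assms(2) by (meson finite_Diff finite_subset)
  show "X \<subseteq> P"
    unfolding AB(5) using AB(2) assms(3) by blast
  have "X - S = B"
    unfolding AB(5) using AB(2) by blast
  then show new: "card (X - S) = j"
    using AB(4) by simp
  have "X \<inter> S = S - A"
    unfolding AB(5) using AB(1,2) by blast
  then show kept: "card (X \<inter> S) = card S - j"
    using AB(1,3) finite_A by (simp add: card_Diff_subset)
  have "j \<le> card S"
    using card_mono[OF finite_S AB(1)] AB(3) by simp
  moreover have "card X = card (X \<inter> S) + card (X - S)"
    using finite_S finite_B \<open>X - S = B\<close> by (metis Int_Diff_Un Int_Diff_disjoint card_Un_disjoint finite_Int finite_Diff)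
  ultimately show "card X = card S"
    using new kept by simp
qed

lemma star_discrepancy_ge_j_swap_into_faces:
  fixes X :: "(real ^ 'n) set"
  assumes "j_swap P S j X" "finite P" "S \<subseteq> P" "\<And>x. x \<in> P - S \<Longrightarrow> x $ i = 1"
  shows "1 - real (card S - j) / card S \<le> star_discrepancy X"
proof -
  note swap = j_swap_cards[OF assms(1-3)]
  have finite_X: "finite X"
    using swap(1) assms(2) by (rule finite_subset)
  have one: "(1 :: real ^ 'n) \<in> unit_cube"
    by (simp add: unit_cube_def)
  have "X \<inter> anchored_box 1 \<subseteq> X \<inter> S"
    using swap(1) assms(4) face_point_notin_anchored_box[OF one] by blast
  then have "card (X \<inter> anchored_box 1) \<le> card S - j"
    using swap(4) finite_X by (metis card_mono finite_Int)
  then have "real (card (X \<inter> anchored_box 1)) / card X \<le> real (card S - j) / card S"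
    using swap(2) by (simp add: divide_right_mono)
  then show ?thesis
    using star_discrepancy_ge_visible[OF finite_X] by linarith
qed

lemma exists_local_not_global_minI:
  fixes P :: "(real ^ 'n) set"
  assumes "finite P" "P \<subseteq> unit_cube" "card P = n" "S \<subseteq> P" "card S = k"
    and "\<And>X. j_swap P S j X \<Longrightarrow> star_discrepancy S \<le> star_discrepancy X"
    and "S' \<subseteq> P" "card S' = k" "star_discrepancy S' < star_discrepancy S"
  shows "\<exists>(P :: (real ^ 'n) set) S. finite P \<and> P \<subseteq> unit_cube \<and> card P = n \<and>
           S \<subseteq> P \<and> card S = k \<and> local_min_SDSSP P k j S \<and> \<not> global_min_SDSSP P k S"
proof (intro exI conjI)
  show "local_min_SDSSP P k j S"
    using assms(4-6) unfolding local_min_SDSSP_def not_less by blast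
  show "\<not> global_min_SDSSP P k S"
    using assms(7-9) unfolding global_min_SDSSP_def not_le[symmetric] by blast
qed (use assms(1-5) in auto)

section \<open>Points in a coordinate plane\<close>

text \<open>The points \<open>(u l, v l)\<close> are the outer and \<open>(u l, v (Suc l))\<close> the inner corners of a
  staircase; a rectangle that does not strictly dominate an inner corner lies below an outer one.\<close>

lemma rectangle_under_staircase:
  fixes x y B :: real and u v :: "nat \<Rightarrow> real"
  assumes "0 \<le> x" "0 \<le> y" "x \<le> u N" "y \<le> v 0"
    and "\<And>l. l < N \<Longrightarrow> x \<le> u l \<or> y \<le> v (Suc l)"
    and "\<And>l. l \<le> N \<Longrightarrow> u l * v l \<le> B"
  shows "x * y \<le> B"
  using assms(3,5,6)
proof (induction N)
  case 0
  then have "x * y \<le> u 0 * v 0"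
    using assms(1,2,4) by (intro mult_mono) auto
  then show ?case
    using "0.prems"(3)[of 0] by simp
next
  case (Suc N)
  show ?case
  proof (cases "x \<le> u N")
    case True
    then show ?thesis
      using Suc by simp
  next
    case False
    then have "y \<le> v (Suc N)"
      using Suc.prems(2)[of N] by auto
    then have "x * y \<le> u (Suc N) * v (Suc N)"
      using assms(1,2) Suc.prems(1) by (intro mult_mono) auto
    then show ?thesis
      using Suc.prems(3)[of "Suc N"] by simp
  qed
qed

definition plane_point :: "'n \<Rightarrow> 'n \<Rightarrow> real \<Rightarrow> real \<Rightarrow> real ^ 'n" where
  "plane_point i1 i2 x y = (\<chi> i. if i = i1 then x else if i = i2 then y else 0)"

definition plane_box :: "'n \<Rightarrow> 'n \<Rightarrow> real \<Rightarrow> real \<Rightarrow> real ^ 'n" where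
  "plane_box i1 i2 x y = (\<chi> i. if i = i1 then x else if i = i2 then y else 1)"

locale coordinate_plane =
  fixes i1 i2 :: "'n::finite"
  assumes coordinates_distinct: "i1 \<noteq> i2"
begin

lemma plane_point_components [simp]:
  "plane_point i1 i2 x y $ i1 = x" "plane_point i1 i2 x y $ i2 = y"
  using coordinates_distinct by (simp_all add: plane_point_def)

lemma plane_point_eq_iff: "plane_point i1 i2 x y = plane_point i1 i2 x' y' \<longleftrightarrow> x = x' \<and> y = y'"
  using coordinates_distinct by (auto simp: plane_point_def vec_eq_iff)

lemma plane_point_in_unit_cube:
  "0 \<le> x \<Longrightarrow> x \<le> 1 \<Longrightarrow> 0 \<le> y \<Longrightarrow> y \<le> 1 \<Longrightarrow> plane_point i1 i2 x y \<in> unit_cube"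
  by (simp add: plane_point_def unit_cube_def)

lemma plane_box_in_unit_cube:
  "0 \<le> x \<Longrightarrow> x \<le> 1 \<Longrightarrow> 0 \<le> y \<Longrightarrow> y \<le> 1 \<Longrightarrow> plane_box i1 i2 x y \<in> unit_cube"
  by (simp add: plane_box_def unit_cube_def)

lemma box_volume_plane_box: "box_volume (plane_box i1 i2 x y) = x * y"
proof -
  have "box_volume (plane_box i1 i2 x y) = x * y * (\<Prod>i\<in>UNIV - {i1, i2}. plane_box i1 i2 x y $ i)"
    using coordinates_distinct
    by (simp add: prod.subset_diff[of "{i1, i2}" UNIV] plane_box_def)
  also have "(\<Prod>i\<in>UNIV - {i1, i2}. plane_box i1 i2 x y $ i) = 1"
    by (intro prod.neutral) (simp add: plane_box_def)
  finally show ?thesis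
    by simp
qed

lemma plane_point_in_anchored_box_iff:
  assumes "0 \<le> x" "0 \<le> y"
  shows "plane_point i1 i2 x y \<in> anchored_box q \<longleftrightarrow>
    x < q $ i1 \<and> y < q $ i2 \<and> (\<forall>i. i \<noteq> i1 \<longrightarrow> i \<noteq> i2 \<longrightarrow> 0 < q $ i)"
proof
  assume "plane_point i1 i2 x y \<in> anchored_box q"
  then have "\<And>i. plane_point i1 i2 x y $ i < q $ i"
    by (simp add: anchored_box_def)
  note less = this
  have "\<forall>i. i \<noteq> i1 \<longrightarrow> i \<noteq> i2 \<longrightarrow> 0 < q $ i"
  proof (intro allI impI)
    fix i
    assume "i \<noteq> i1" "i \<noteq> i2"
    then show "0 < q $ i"
      using less[of i] by (simp add: plane_point_def)
  qed
  then show "x < q $ i1 \<and> y < q $ i2 \<and> (\<forall>i. i \<noteq> i1 \<longrightarrow> i \<noteq> i2 \<longrightarrow> 0 < q $ i)"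
    using less[of i1] less[of i2] by simp
next
  assume "x < q $ i1 \<and> y < q $ i2 \<and> (\<forall>i. i \<noteq> i1 \<longrightarrow> i \<noteq> i2 \<longrightarrow> 0 < q $ i)"
  then show "plane_point i1 i2 x y \<in> anchored_box q"
    using assms by (auto simp: anchored_box_def plane_point_def)
qed

lemma plane_point_in_plane_box_iff:
  "0 \<le> x \<Longrightarrow> 0 \<le> y \<Longrightarrow> plane_point i1 i2 x y \<in> anchored_box (plane_box i1 i2 u v) \<longleftrightarrow> x < u \<and> y < v"
  using coordinates_distinct by (simp add: plane_point_in_anchored_box_iff plane_box_def)

lemma box_volume_le_staircase:
  fixes u v :: "nat \<Rightarrow> real"
  assumes q: "q \<in> unit_cube"
    and avoid: "\<And>l. l < N \<Longrightarrow> plane_point i1 i2 (u l) (v (Suc l)) \<notin> anchored_box q"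
    and nonneg: "\<And>l. l < N \<Longrightarrow> 0 \<le> u l \<and> 0 \<le> v (Suc l)"
    and ends: "1 \<le> u N" "1 \<le> v 0"
    and corners: "\<And>l. l \<le> N \<Longrightarrow> u l * v l \<le> B"
  shows "box_volume q \<le> B"
proof (cases "\<forall>i. 0 < q $ i")
  case True
  have unit: "0 \<le> q $ i1" "q $ i1 \<le> 1" "0 \<le> q $ i2" "q $ i2 \<le> 1"
    using q by (auto simp: unit_cube_def)
  have staircase: "q $ i1 \<le> u l \<or> q $ i2 \<le> v (Suc l)" if l: "l < N" for l
  proof (rule ccontr)
    assume "\<not> (q $ i1 \<le> u l \<or> q $ i2 \<le> v (Suc l))"
    then have "plane_point i1 i2 (u l) (v (Suc l)) \<in> anchored_box q"
      using nonneg[OF l] True by (simp add: plane_point_in_anchored_box_iff)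
    with avoid[OF l] show False
      by contradiction
  qed
  have "q $ i1 * q $ i2 \<le> B"
  proof (rule rectangle_under_staircase[where u = u and v = v])
    show "q $ i1 \<le> u N" "q $ i2 \<le> v 0"
      using unit ends by linarith+
  qed (use unit staircase corners in simp_all)
  then show ?thesis
    using box_volume_le_two_components[OF q coordinates_distinct] by linarith
next
  case False
  then obtain i where "q $ i \<le> 0"
    using not_less by blast
  then have "box_volume q \<le> 0"
    using box_volume_le_component[OF q, of i] by linarith
  moreover have "0 \<le> u 0"
    using nonneg[of 0] ends(1) by (cases N) auto
  then have "0 \<le> u 0 * v 0"
    using ends(2) by simp
  then have "0 \<le> B"
    using corners[of 0] by simp
  ultimately show ?thesis
    by linarith
qed

definition padding :: "nat \<Rightarrow> (real ^ 'n) set" where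
  "padding N = (\<lambda>r. plane_point i1 i2 1 (1 / (real r + 2))) ` {..<N}"

lemma finite_padding [simp]: "finite (padding N)"
  by (simp add: padding_def)

lemma card_padding [simp]: "card (padding N) = N"
proof -
  have "inj (\<lambda>r. plane_point i1 i2 1 (1 / (real r + 2)))"
    by (auto simp: inj_def plane_point_eq_iff)
  then show ?thesis
    unfolding padding_def by (simp add: card_image inj_on_subset)
qed

lemma padding_eq_empty_iff [simp]: "padding N = {} \<longleftrightarrow> N = 0"
  by (auto simp: padding_def lessThan_empty_iff)

lemma padding_mono: "N \<le> N' \<Longrightarrow> padding N \<subseteq> padding N'"
  by (auto simp: padding_def)

lemma padding_subset_unit_cube: "padding N \<subseteq> unit_cube"
  by (auto simp: padding_def intro!: plane_point_in_unit_cube)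

lemma padding_face: "x \<in> padding N \<Longrightarrow> x $ i1 = 1"
  by (auto simp: padding_def)

lemma vec_notin_padding: "a < 1 \<Longrightarrow> vec a \<notin> padding N"
  using padding_face by fastforce

lemma padding_disjoint: "(\<And>x. x \<in> X \<Longrightarrow> x $ i1 < 1) \<Longrightarrow> X \<inter> padding N = {}"
  using padding_face by (metis disjoint_iff less_irrefl)

end

section \<open>The staircase construction\<close>

locale staircase_design = coordinate_plane i1 i2 for i1 i2 :: "'n::finite" +
  fixes k j :: nat
  assumes j_pos: "0 < j" and j_add_2_le_k: "j + 2 \<le> k"
begin

definition level :: real where
  "level = 1 - 1 / (2 * real k)"

definition step :: real where
  "step = (1 - level) / real j"

definition corner_x :: "nat \<Rightarrow> real" where
  "corner_x i = level + real i * step"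

definition corner_y :: "nat \<Rightarrow> real" where
  "corner_y i = level / corner_x i"

lemma level_bounds: "1 - 1 / real k < level" "level < 1"
  using j_add_2_le_k by (auto simp: level_def field_simps)

lemma step_bounds: "0 < step" "step < level" "0 < level"
proof -
  have "(1 - level) / real j \<le> 1 - level"
    using j_pos level_bounds by (simp add: divide_le_eq)
  moreover have "1 - level < level"
    using j_add_2_le_k by (simp add: level_def field_simps)
  ultimately show "0 < step" "step < level" "0 < level"
    using level_bounds j_pos by (auto simp: step_def)
qed

lemma corner_x_less_iff: "corner_x i < corner_x i' \<longleftrightarrow> i < i'"
  using step_bounds by (simp add: corner_x_def)

lemma corner_x_eq_iff: "corner_x i = corner_x i' \<longleftrightarrow> i = i'"
  using step_bounds by (simp add: corner_x_def)

lemma corner_x_0 [simp]: "corner_x 0 = level"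
  by (simp add: corner_x_def)

lemma corner_x_j [simp]: "corner_x j = 1"
  using j_pos by (simp add: corner_x_def step_def)

lemma corner_x_ge_level: "level \<le> corner_x i"
  using step_bounds by (simp add: corner_x_def)

lemma corner_x_pos: "0 < corner_x i"
  using corner_x_ge_level[of i] step_bounds by linarith

lemma corner_x_le_1: "i \<le> j \<Longrightarrow> corner_x i \<le> 1"
  using corner_x_less_iff[of j i] by simp

lemma corner_y_less_iff: "corner_y i < corner_y i' \<longleftrightarrow> i' < i"
proof -
  have "corner_y i < corner_y i' \<longleftrightarrow> corner_x i' < corner_x i"
    using corner_x_pos[of i] corner_x_pos[of i'] step_bounds
    by (simp add: corner_y_def field_simps)
  then show ?thesis
    by (simp add: corner_x_less_iff)
qed

lemma corner_y_eq_iff: "corner_y i = corner_y i' \<longleftrightarrow> i = i'"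
  by (metis corner_y_less_iff less_irrefl linorder_neqE_nat)

lemma corner_y_0 [simp]: "corner_y 0 = 1"
  using step_bounds by (simp add: corner_y_def)

lemma corner_y_pos: "0 < corner_y i"
  using corner_x_pos[of i] step_bounds by (simp add: corner_y_def)

lemma corner_y_le_1: "corner_y i \<le> 1"
  using corner_y_less_iff[of 0 i] by (cases i) auto

lemma corner_x_times_y [simp]: "corner_x i * corner_y i = level"
  using corner_x_pos[of i] by (simp add: corner_y_def)

lemma guard_staircase_corner_le:
  assumes "i \<le> Suc j"
  shows "(corner_x i - step) * corner_y i \<le> level / (1 + step)"
proof -
  have "corner_x i \<le> corner_x (Suc j)"
    using corner_x_less_iff[of "Suc j" i] assms by linarith
  also have "corner_x (Suc j) = 1 + step"
    using corner_x_j by (simp add: corner_x_def algebra_simps)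
  finally have "step * corner_x i \<le> step * (1 + step)"
    using step_bounds by (intro mult_left_mono) auto
  then have "1 - step / corner_x i \<le> 1 / (1 + step)"
    using corner_x_pos[of i] step_bounds by (simp add: field_simps)
  then have "level * (1 - step / corner_x i) \<le> level * (1 / (1 + step))"
    using step_bounds by (intro mult_left_mono) auto
  moreover have "(corner_x i - step) * corner_y i = level * (1 - step / corner_x i)"
    using corner_x_pos[of i] by (simp add: corner_y_def field_simps)
  ultimately show ?thesis
    by simp
qed

definition inner_corner :: "nat \<Rightarrow> real ^ 'n" where
  "inner_corner l = plane_point i1 i2 (corner_x l) (corner_y (Suc l))"

definition guard :: "nat \<Rightarrow> real ^ 'n" where
  "guard l = plane_point i1 i2 (corner_x l - step) (corner_y (Suc l))"

definition corner_box :: "nat \<Rightarrow> real ^ 'n" where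
  "corner_box i = plane_box i1 i2 (corner_x i) (corner_y i)"

lemma corner_box_in_unit_cube: "i \<le> j \<Longrightarrow> corner_box i \<in> unit_cube"
  unfolding corner_box_def
  by (intro plane_box_in_unit_cube) (auto intro: less_imp_le corner_x_pos corner_y_pos corner_x_le_1 corner_y_le_1)

lemma box_volume_corner_box: "box_volume (corner_box i) = level"
  by (simp add: corner_box_def box_volume_plane_box)

lemma guard_x_nonneg: "0 \<le> corner_x l - step"
  using corner_x_ge_level[of l] step_bounds by linarith

lemma inner_corner_notin_corner_box: "inner_corner l \<notin> anchored_box (corner_box i)"
  using corner_x_pos[of l] corner_y_pos[of "Suc l"]
  by (auto simp: inner_corner_def corner_box_def plane_point_in_plane_box_iff corner_x_less_iff corner_y_less_iff)

lemma guard_in_corner_box_iff: "guard l \<in> anchored_box (corner_box i) \<longleftrightarrow> l = i"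
proof -
  have "corner_x (Suc i) = corner_x i + step"
    by (simp add: corner_x_def algebra_simps)
  then have "corner_x l - step < corner_x i \<longleftrightarrow> corner_x l < corner_x (Suc i)"
    by linarith
  then have "corner_x l - step < corner_x i \<longleftrightarrow> l < Suc i"
    by (simp add: corner_x_less_iff)
  then show ?thesis
    using guard_x_nonneg[of l] corner_y_pos[of "Suc l"]
    by (auto simp: guard_def corner_box_def plane_point_in_plane_box_iff corner_y_less_iff)
qed

lemma inner_corner_in_unit_cube: "l < j \<Longrightarrow> inner_corner l \<in> unit_cube"
  unfolding inner_corner_def
  by (intro plane_point_in_unit_cube) (auto intro: less_imp_le corner_x_pos corner_y_pos corner_x_le_1 corner_y_le_1)

lemma guard_in_unit_cube: "l \<le> j \<Longrightarrow> guard l \<in> unit_cube"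
  unfolding guard_def using guard_x_nonneg[of l] corner_x_le_1[of l] step_bounds
  by (intro plane_point_in_unit_cube) (auto intro: less_imp_le corner_y_pos corner_y_le_1)

lemma inner_corner_first_coordinate: "l < j \<Longrightarrow> inner_corner l $ i1 < 1"
  using corner_x_less_iff[of l j] by (simp add: inner_corner_def)

lemma guard_first_coordinate: "l \<le> j \<Longrightarrow> guard l $ i1 < 1"
  using corner_x_le_1[of l] step_bounds by (simp add: guard_def)

lemma inj_inner_corner: "inj inner_corner"
  by (auto simp: inj_def inner_corner_def plane_point_eq_iff corner_x_eq_iff)

lemma inj_guard: "inj guard"
  by (auto simp: inj_def guard_def plane_point_eq_iff corner_y_eq_iff)

lemma inner_corner_neq_guard: "inner_corner l \<noteq> guard l'"
  using step_bounds
  by (auto simp: inner_corner_def guard_def plane_point_eq_iff corner_y_eq_iff)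

definition ground_set :: "nat \<Rightarrow> (real ^ 'n) set" where
  "ground_set N = inner_corner ` {..<j} \<union> guard ` {..j} \<union> padding N"

definition inner_set :: "(real ^ 'n) set" where
  "inner_set = inner_corner ` {..<j} \<union> padding (k - j)"

definition guard_set :: "(real ^ 'n) set" where
  "guard_set = guard ` {..j} \<union> padding (k - j - 1)"

lemma inner_corners_disjoint_padding: "inner_corner ` {..<j} \<inter> padding N = {}"
  by (rule padding_disjoint) (auto intro: inner_corner_first_coordinate)

lemma guards_disjoint_padding: "guard ` {..j} \<inter> padding N = {}"
  by (rule padding_disjoint) (auto intro: guard_first_coordinate)

lemma finite_ground_set: "finite (ground_set N)"
  by (simp add: ground_set_def)

lemma ground_set_subset_unit_cube: "ground_set N \<subseteq> unit_cube"
  using padding_subset_unit_cube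
  by (auto simp: ground_set_def intro: inner_corner_in_unit_cube guard_in_unit_cube)

lemma card_ground_set: "card (ground_set N) = 2 * j + 1 + N"
proof -
  have "inner_corner ` {..<j} \<inter> guard ` {..j} = {}"
    using inner_corner_neq_guard by blast
  then show ?thesis
    using inner_corners_disjoint_padding guards_disjoint_padding inj_inner_corner inj_guard
    by (simp add: ground_set_def card_Un_disjoint card_image inj_on_subset Int_Un_distrib2)
qed

lemma card_inner_set: "card inner_set = k"
  using inner_corners_disjoint_padding inj_inner_corner j_add_2_le_k
  by (simp add: inner_set_def card_Un_disjoint card_image inj_on_subset)

lemma card_guard_set: "card guard_set = k"
  using guards_disjoint_padding inj_guard j_add_2_le_k
  by (simp add: guard_set_def card_Un_disjoint card_image inj_on_subset)

lemma inner_set_subset_ground_set: "k - j \<le> N \<Longrightarrow> inner_set \<subseteq> ground_set N"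
  using padding_mono by (auto simp: inner_set_def ground_set_def)

lemma guard_set_subset_ground_set: "k - j - 1 \<le> N \<Longrightarrow> guard_set \<subseteq> ground_set N"
  using padding_mono by (auto simp: guard_set_def ground_set_def)

lemma star_discrepancy_ge_level:
  assumes "X \<subseteq> ground_set N" "i \<le> j" "guard i \<notin> X"
  shows "level \<le> star_discrepancy X"
proof -
  have box: "corner_box i \<in> unit_cube"
    using assms(2) by (rule corner_box_in_unit_cube)
  have "x \<notin> anchored_box (corner_box i)" if x: "x \<in> X" for x
  proof -
    consider l where "x = inner_corner l" | l where "x = guard l" "l \<noteq> i" | "x \<in> padding N"
      using assms(1,3) x unfolding ground_set_def by blast
    then show ?thesis
    proof cases
      case 3
      then show ?thesis
        using face_point_notin_anchored_box[OF box padding_face] by blast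
    qed (auto simp: inner_corner_notin_corner_box guard_in_corner_box_iff)
  qed
  then have "X \<inter> anchored_box (corner_box i) = {}"
    by blast
  then show ?thesis
    using star_discrepancy_ge_empty_box[OF _ box] finite_subset[OF assms(1) finite_ground_set]
    by (simp add: box_volume_corner_box)
qed

lemma box_volume_le_level_if_inner_corners_avoided:
  assumes "q \<in> unit_cube" "inner_corner ` {..<j} \<inter> anchored_box q = {}"
  shows "box_volume q \<le> level"
proof (rule box_volume_le_staircase[where N = j and u = corner_x and v = corner_y])
  show "plane_point i1 i2 (corner_x l) (corner_y (Suc l)) \<notin> anchored_box q" if "l < j" for l
    using assms(2) that unfolding inner_corner_def by blast
  show "0 \<le> corner_x l \<and> 0 \<le> corner_y (Suc l)" for l
    using corner_x_pos[of l] corner_y_pos[of "Suc l"] by simp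
qed (use assms(1) in simp_all)

lemma box_volume_le_if_guards_avoided:
  assumes "q \<in> unit_cube" "guard ` {..j} \<inter> anchored_box q = {}"
  shows "box_volume q \<le> level / (1 + step)"
proof (rule box_volume_le_staircase[where N = "Suc j" and u = "\<lambda>l. corner_x l - step" and v = corner_y])
  show "plane_point i1 i2 (corner_x l - step) (corner_y (Suc l)) \<notin> anchored_box q" if "l < Suc j" for l
  proof -
    have "guard l \<in> guard ` {..j}"
      using that by simp
    then show ?thesis
      using assms(2) unfolding guard_def by blast
  qed
  show "1 \<le> corner_x (Suc j) - step"
    using corner_x_j by (simp add: corner_x_def algebra_simps)
  show "0 \<le> corner_x l - step \<and> 0 \<le> corner_y (Suc l)" for l
    using guard_x_nonneg[of l] corner_y_pos[of "Suc l"] by simp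
qed (use assms(1) guard_staircase_corner_le in simp_all)

lemma star_discrepancy_inner_set: "star_discrepancy inner_set = level"
proof (rule antisym)
  have "padding (k - j) \<noteq> {}"
    using j_add_2_le_k by simp
  then obtain x where x: "x \<in> padding (k - j)"
    by blast
  have "star_discrepancy inner_set \<le> max level (1 - 1 / card inner_set)"
  proof (rule star_discrepancy_le_face_point[of inner_set x i1])
    show "finite inner_set" "x \<in> inner_set"
      using x by (simp_all add: inner_set_def)
    show "x $ i1 = 1"
      using x by (rule padding_face)
    show "box_volume q \<le> level" if "q \<in> unit_cube" "inner_set \<inter> anchored_box q = {}" for q
      using that(2) unfolding inner_set_def
      by (intro box_volume_le_level_if_inner_corners_avoided[OF that(1)]) blast
  qed
  then show "star_discrepancy inner_set \<le> level"
    using level_bounds by (simp add: card_inner_set)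
  have "guard 0 \<notin> inner_corner ` {..<j}"
    using not_sym[OF inner_corner_neq_guard] by auto
  moreover have "guard 0 \<notin> padding (k - j)"
    using guard_first_coordinate[of 0] padding_face by fastforce
  ultimately have "guard 0 \<notin> inner_set"
    by (simp add: inner_set_def)
  then show "level \<le> star_discrepancy inner_set"
    by (rule star_discrepancy_ge_level[OF inner_set_subset_ground_set[OF order_refl] le0])
qed

lemma star_discrepancy_guard_set_less: "star_discrepancy guard_set < level"
proof -
  have "padding (k - j - 1) \<noteq> {}"
    using j_add_2_le_k by simp
  then obtain x where x: "x \<in> padding (k - j - 1)"
    by blast
  have "star_discrepancy guard_set \<le> max (level / (1 + step)) (1 - 1 / card guard_set)"
  proof (rule star_discrepancy_le_face_point[of guard_set x i1])
    show "finite guard_set" "x \<in> guard_set"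
      using x by (simp_all add: guard_set_def)
    show "x $ i1 = 1"
      using x by (rule padding_face)
    show "box_volume q \<le> level / (1 + step)" if "q \<in> unit_cube" "guard_set \<inter> anchored_box q = {}" for q
      using that(2) unfolding guard_set_def
      by (intro box_volume_le_if_guards_avoided[OF that(1)]) blast
  qed
  moreover have "level / (1 + step) < level"
    using step_bounds by (simp add: field_simps)
  ultimately show ?thesis
    using level_bounds by (simp add: card_guard_set)
qed

lemma guards_disjoint_inner_set: "guard ` {..j} \<inter> inner_set = {}"
proof -
  have "guard ` {..j} \<inter> inner_corner ` {..<j} = {}"
    using not_sym[OF inner_corner_neq_guard] by auto
  then show ?thesis
    using guards_disjoint_padding[of "k - j"] by (auto simp: inner_set_def)
qed

lemma star_discrepancy_ge_level_j_swap:
  assumes "j_swap (ground_set N) inner_set j X" "k - j \<le> N"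
  shows "level \<le> star_discrepancy X"
proof -
  note swap = j_swap_cards[OF assms(1) finite_ground_set inner_set_subset_ground_set[OF assms(2)]]
  have "\<not> guard ` {..j} \<subseteq> X - inner_set"
  proof
    assume "guard ` {..j} \<subseteq> X - inner_set"
    moreover have "finite (X - inner_set)"
      using finite_subset[OF swap(1) finite_ground_set] by simp
    ultimately have "card (guard ` {..j}) \<le> card (X - inner_set)"
      by (rule card_mono[rotated])
    then show False
      using swap(3) inj_guard by (simp add: card_image inj_on_subset)
  qed
  then obtain i where i: "i \<in> {..j}" "guard i \<notin> X - inner_set"
    by blast
  moreover have "guard i \<notin> inner_set"
    using guards_disjoint_inner_set i(1) by blast
  ultimately show ?thesis
    using star_discrepancy_ge_level[OF swap(1)] by simp
qed

theorem exists_local_not_global_min: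
  assumes "k + j < n"
  shows "\<exists>(P :: (real ^ 'n) set) S. finite P \<and> P \<subseteq> unit_cube \<and> card P = n \<and>
           S \<subseteq> P \<and> card S = k \<and> local_min_SDSSP P k j S \<and> \<not> global_min_SDSSP P k S"
proof -
  define N where "N = n - (2 * j + 1)"
  have N: "k - j \<le> N" "k - j - 1 \<le> N" "card (ground_set N) = n"
    using assms j_add_2_le_k by (auto simp: N_def card_ground_set)
  show ?thesis
  proof (rule exists_local_not_global_minI[OF finite_ground_set ground_set_subset_unit_cube N(3)
        inner_set_subset_ground_set[OF N(1)] card_inner_set _
        guard_set_subset_ground_set[OF N(2)] card_guard_set])
    show "star_discrepancy inner_set \<le> star_discrepancy X" if "j_swap (ground_set N) inner_set j X" for X
      using star_discrepancy_ge_level_j_swap[OF that N(1)] by (simp add: star_discrepancy_inner_set)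
    show "star_discrepancy guard_set < star_discrepancy inner_set"
      using star_discrepancy_guard_set_less by (simp add: star_discrepancy_inner_set)
  qed
qed

end

section \<open>Diagonal constructions\<close>

locale diagonal_points = coordinate_plane i1 i2 for i1 i2 :: "'n::finite" +
  fixes c :: real
  assumes c_nonneg: "0 \<le> c" and c_less_1: "c < 1" and c_power: "3/4 \<le> c ^ CARD('n)"
begin

abbreviation high_point :: "real ^ 'n" where
  "high_point \<equiv> vec c"

lemma three_quarters_le_c: "3/4 \<le> c"
proof -
  have "c ^ CARD('n) \<le> c ^ 1"
    using c_nonneg c_less_1 by (intro power_decreasing) auto
  then show ?thesis
    using c_power by simp
qed

lemma box_volume_ge_if_high_point_in: "high_point \<in> anchored_box q \<Longrightarrow> 3/4 \<le> box_volume q"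
  using box_volume_ge_if_vec_in[OF c_nonneg, of q] c_power by linarith

lemma box_volume_le_if_high_point_notin: "q \<in> unit_cube \<Longrightarrow> high_point \<notin> anchored_box q \<Longrightarrow> box_volume q \<le> c"
  using box_volume_le_if_vec_notin[OF _ c_nonneg] .

lemma vec_in_anchored_box_if_high_point_in:
  assumes "high_point \<in> anchored_box q" "0 \<le> x" "x \<le> c"
  shows "(vec x :: real ^ 'n) \<in> anchored_box q"
  using assms vec_in_anchored_box[OF c_nonneg] vec_in_anchored_box[OF assms(2)] by (meson le_less_trans)

lemma high_point_in_unit_cube: "high_point \<in> unit_cube"
  using c_nonneg c_less_1 by (simp add: vec_in_unit_cube)

end

locale diagonal_design = diagonal_points i1 i2 c for i1 i2 :: "'n::finite" and c :: real +
  fixes k :: nat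
  assumes three_le_k: "3 \<le> k"
begin

definition spacing :: real where
  "spacing = (1 - c) / real k"

definition low_point :: "nat \<Rightarrow> real ^ 'n" where
  "low_point i = vec (real i * spacing / real k)"

definition diagonal_set :: "(real ^ 'n) set" where
  "diagonal_set = low_point ` {..<k - 1} \<union> {high_point}"

definition better_diagonal_set :: "(real ^ 'n) set" where
  "better_diagonal_set = {0, high_point} \<union> padding (k - 2)"

lemma spacing_bounds: "0 < spacing" "spacing * real k = 1 - c"
  using c_less_1 three_le_k by (auto simp: spacing_def)

lemma low_point_bounds: "i < k \<Longrightarrow> 0 \<le> real i * spacing / real k \<and> real i * spacing / real k < spacing"
  using spacing_bounds three_le_k by (auto simp: field_simps)

lemma spacing_less_c: "spacing < c"
proof -
  have "c * 3 \<le> c * real k"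
    using c_nonneg three_le_k by (intro mult_left_mono) auto
  then have "1 - c < c * real k"
    using three_quarters_le_c by linarith
  then show ?thesis
    using three_le_k by (simp add: spacing_def pos_divide_less_eq)
qed

lemma low_point_0 [simp]: "low_point 0 = 0"
  by (simp add: low_point_def vec_eq_iff)

lemma inj_low_point: "inj low_point"
proof (rule injI)
  fix a b
  assume "low_point a = low_point b"
  then have "real a * (spacing / real k) = real b * (spacing / real k)"
    by (simp add: low_point_def vec_inj)
  moreover have "spacing / real k \<noteq> 0"
    using spacing_bounds three_le_k by simp
  ultimately show "a = b"
    by simp
qed

lemma low_point_in_anchored_box_spacing:
  assumes "i < k"
  shows "low_point i \<in> anchored_box (vec spacing)"
  using low_point_bounds[OF assms] unfolding low_point_def
  by (subst vec_in_anchored_box) simp_all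

lemma high_point_notin_low_points: "high_point \<notin> low_point ` {..<k}"
proof
  assume "high_point \<in> low_point ` {..<k}"
  then obtain i where "i < k" "c = real i * spacing / real k"
    by (auto simp: low_point_def vec_inj)
  then show False
    using low_point_bounds[of i] spacing_less_c by linarith
qed

lemma card_diagonal_set: "card diagonal_set = k"
proof -
  have "high_point \<notin> low_point ` {..<k - 1}"
    using high_point_notin_low_points by auto
  then show ?thesis
    using inj_low_point three_le_k by (simp add: diagonal_set_def card_image inj_on_subset)
qed

lemma diagonal_set_elements:
  assumes "x \<in> diagonal_set"
  shows "\<exists>a. 0 \<le> a \<and> a < 1 \<and> x = vec a"
proof (cases "x = high_point")
  case False
  then obtain i where "i < k - 1" "x = low_point i"
    using assms by (auto simp: diagonal_set_def)
  moreover from this have "i < k"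
    by linarith
  moreover from this have "real i * spacing / real k < 1"
    using low_point_bounds[of i] spacing_less_c c_less_1 by linarith
  ultimately show ?thesis
    using low_point_bounds[of i] unfolding low_point_def
    by (intro exI[of _ "real i * spacing / real k"]) simp
qed (use c_nonneg c_less_1 in auto)

lemma diagonal_set_subset_unit_cube: "diagonal_set \<subseteq> unit_cube"
proof
  fix x
  assume "x \<in> diagonal_set"
  then obtain a where "0 \<le> a" "a < 1" "x = vec a"
    using diagonal_set_elements by blast
  then show "x \<in> unit_cube"
    by (simp add: vec_in_unit_cube)
qed

lemma diagonal_set_disjoint_padding: "diagonal_set \<inter> padding N = {}"
proof (rule padding_disjoint)
  fix x
  assume "x \<in> diagonal_set"
  then obtain a where "a < 1" "x = vec a"
    using diagonal_set_elements by blast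
  then show "x $ i1 < 1"
    by simp
qed

lemma finite_diagonal_set: "finite diagonal_set"
  by (simp add: diagonal_set_def)

lemma origin_in_diagonal_set: "0 \<in> diagonal_set"
proof -
  have "0 \<in> low_point ` {..<k - 1}"
    using three_le_k by (intro image_eqI[where x = 0]) simp_all
  then show ?thesis
    by (simp add: diagonal_set_def)
qed

lemma star_discrepancy_diagonal_set_le: "star_discrepancy diagonal_set \<le> 1 - 1 / k"
proof (rule star_discrepancy_le)
  fix q :: "real ^ 'n"
  assume q: "q \<in> unit_cube"
  have "box_fraction diagonal_set q - box_volume q \<le> 1 - 1 / k"
  proof (cases "high_point \<in> anchored_box q")
    case True
    have "1 / real k \<le> 1 / 3"
      using three_le_k by (simp add: field_simps)
    then show ?thesis
      using box_fraction_le_1[OF finite_diagonal_set, of q] box_volume_ge_if_high_point_in[OF True] by linarith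
  next
    case False
    then have "diagonal_set \<inter> anchored_box q \<subseteq> low_point ` {..<k - 1}"
      by (auto simp: diagonal_set_def)
    from card_mono[OF _ this] have "card (diagonal_set \<inter> anchored_box q) \<le> k - 1"
      using inj_low_point by (simp add: card_image inj_on_subset)
    then have "box_fraction diagonal_set q \<le> real (k - 1) / k"
      using box_fraction_le by (metis card_diagonal_set)
    also have "\<dots> = 1 - 1 / k"
      using three_le_k by (simp add: of_nat_diff field_simps)
    finally show ?thesis
      using box_volume_nonneg[OF q] by linarith
  qed
  moreover have "box_volume q - box_fraction diagonal_set q \<le> 1 - 1 / k"
    using box_volume_minus_fraction_le_origin[OF finite_diagonal_set origin_in_diagonal_set q]
    by (simp add: card_diagonal_set)
  ultimately show "\<bar>box_fraction diagonal_set q - box_volume q\<bar> \<le> 1 - 1 / k"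
    by (simp add: abs_le_iff)
qed

lemma star_discrepancy_diagonal_set_ge: "1 - 1 / k - spacing \<le> star_discrepancy diagonal_set"
proof -
  have q: "vec spacing \<in> unit_cube"
    using spacing_bounds spacing_less_c c_less_1 by (simp add: vec_in_unit_cube)
  have "high_point \<notin> anchored_box (vec spacing)"
    using spacing_less_c c_nonneg by (simp add: vec_in_anchored_box)
  moreover have "low_point ` {..<k - 1} \<subseteq> anchored_box (vec spacing)"
    using low_point_in_anchored_box_spacing by auto
  ultimately have "diagonal_set \<inter> anchored_box (vec spacing) = low_point ` {..<k - 1}"
    by (auto simp: diagonal_set_def)
  then have "box_fraction diagonal_set (vec spacing) = real (k - 1) / k"
    using inj_low_point by (simp add: card_diagonal_set card_image inj_on_subset)
  also have "\<dots> = 1 - 1 / k"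
    using three_le_k by (simp add: of_nat_diff field_simps)
  finally show ?thesis
    using abs_le_D1[OF star_discrepancy_ge[OF finite_diagonal_set q]] box_volume_le_component[OF q]
    by (metis vec_component diff_left_mono order_trans)
qed

lemma origin_in_anchored_box_if_high_point_in: "high_point \<in> anchored_box q \<Longrightarrow> 0 \<in> anchored_box q"
  using vec_in_anchored_box_if_high_point_in[of q 0] c_nonneg by simp

lemma finite_better_diagonal_set: "finite better_diagonal_set"
  by (simp add: better_diagonal_set_def)

lemma origin_neq_high_point: "(0 :: real ^ 'n) \<noteq> high_point"
  using three_quarters_le_c by (auto simp: vec_eq_iff)

lemma card_better_diagonal_set: "card better_diagonal_set = k"
proof -
  have "0 \<notin> padding (k - 2)"
    using padding_face by fastforce
  then show ?thesis
    using origin_neq_high_point vec_notin_padding[OF c_less_1] three_le_k by (simp add: better_diagonal_set_def)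
qed

lemma better_diagonal_set_inter_anchored_box:
  assumes "q \<in> unit_cube"
  shows "better_diagonal_set \<inter> anchored_box q \<subseteq> {0, high_point}"
proof -
  have "padding (k - 2) \<inter> anchored_box q = {}"
    using face_point_notin_anchored_box[OF assms padding_face] by blast
  then show ?thesis
    unfolding better_diagonal_set_def by blast
qed

lemma fraction_minus_box_volume_better_diagonal_set:
  assumes q: "q \<in> unit_cube"
  shows "box_fraction better_diagonal_set q - box_volume q \<le> 1 / k"
proof (cases "high_point \<in> anchored_box q")
  case True
  have "card (better_diagonal_set \<inter> anchored_box q) \<le> 2"
    using card_mono[OF _ better_diagonal_set_inter_anchored_box[OF q]] origin_neq_high_point
    by simp
  then have "box_fraction better_diagonal_set q \<le> 2 / k"
    using box_fraction_le[of better_diagonal_set q 2] by (simp add: card_better_diagonal_set)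
  moreover have "2 / real k \<le> 3/4 + 1 / k"
    using three_le_k by (simp add: field_simps)
  ultimately show ?thesis
    using box_volume_ge_if_high_point_in[OF True] by linarith
next
  case False
  then have "better_diagonal_set \<inter> anchored_box q \<subseteq> {0}"
    using better_diagonal_set_inter_anchored_box[OF q] by blast
  from card_mono[OF _ this] have "card (better_diagonal_set \<inter> anchored_box q) \<le> 1"
    by simp
  then have "box_fraction better_diagonal_set q \<le> 1 / k"
    using box_fraction_le[of better_diagonal_set q 1] by (simp add: card_better_diagonal_set)
  then show ?thesis
    using box_volume_nonneg[OF q] by linarith
qed

lemma box_volume_minus_fraction_better_diagonal_set:
  assumes q: "q \<in> unit_cube"
  shows "box_volume q - box_fraction better_diagonal_set q \<le> max (1 - 2 / k) (c - 1 / k)"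
proof (cases "high_point \<in> anchored_box q")
  case True
  then have "{0, high_point} \<subseteq> better_diagonal_set \<inter> anchored_box q"
    using origin_in_anchored_box_if_high_point_in by (auto simp: better_diagonal_set_def)
  from card_mono[OF _ this] have "2 \<le> card (better_diagonal_set \<inter> anchored_box q)"
    using origin_neq_high_point finite_better_diagonal_set by simp
  then have "2 / k \<le> box_fraction better_diagonal_set q"
    using box_fraction_ge[of 2 better_diagonal_set q] by (simp add: card_better_diagonal_set)
  then show ?thesis
    using box_volume_le_1[OF q] by linarith
next
  case False
  then have vol: "box_volume q \<le> c"
    by (rule box_volume_le_if_high_point_notin[OF q])
  show ?thesis
  proof (cases "better_diagonal_set \<inter> anchored_box q = {}")
    case True
    then have "0 \<notin> anchored_box q"
      by (auto simp: better_diagonal_set_def)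
    then have "box_volume q = 0"
      by (rule box_volume_eq_0_if_origin_notin[OF q])
    moreover have "2 / real k \<le> 1"
      using three_le_k by (simp add: field_simps)
    ultimately have "box_volume q - box_fraction better_diagonal_set q \<le> 1 - 2 / k"
      using box_fraction_nonneg[of better_diagonal_set q] by linarith
    then show ?thesis
      by (rule max.coboundedI1)
  next
    case False
    then have "1 \<le> card (better_diagonal_set \<inter> anchored_box q)"
      using finite_better_diagonal_set by (simp add: Suc_le_eq card_gt_0_iff)
    then have "1 / k \<le> box_fraction better_diagonal_set q"
      using box_fraction_ge[of 1 better_diagonal_set q] by (simp add: card_better_diagonal_set)
    then show ?thesis
      using vol by linarith
  qed
qed

lemma star_discrepancy_better_diagonal_set_less:
  "star_discrepancy better_diagonal_set < 1 - 1 / k - spacing"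
proof -
  define B where "B = max (1 / k) (max (1 - 2 / k) (c - 1 / k))"
  have "star_discrepancy better_diagonal_set \<le> B"
  proof (rule star_discrepancy_le)
    fix q :: "real ^ 'n"
    assume "q \<in> unit_cube"
    then show "\<bar>box_fraction better_diagonal_set q - box_volume q\<bar> \<le> B"
      using fraction_minus_box_volume_better_diagonal_set box_volume_minus_fraction_better_diagonal_set
      unfolding B_def abs_le_iff by fastforce
  qed
  moreover have "(1 - c) * 1 < (1 - c) * real k"
    using c_less_1 three_le_k by (intro mult_strict_left_mono) auto
  then have "spacing < 1 - c"
    using three_le_k by (simp add: spacing_def pos_divide_less_eq)
  moreover have "spacing < 1 / k"
    using spacing_bounds three_quarters_le_c three_le_k by (simp add: field_simps)
  moreover have "1 / real k \<le> 1 / 3" "2 / real k = 2 * (1 / k)"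
    using three_le_k by (simp_all add: field_simps)
  ultimately have "B < 1 - 1 / k - spacing"
    unfolding B_def max_less_iff_conj by linarith
  with \<open>star_discrepancy better_diagonal_set \<le> B\<close> show ?thesis
    by linarith
qed

lemma star_discrepancy_ge_diagonal_j_swap:
  assumes "j_swap (diagonal_set \<union> padding N) diagonal_set (k - 1) X"
  shows "1 - 1 / k \<le> star_discrepancy X"
proof -
  have "1 - real (card diagonal_set - (k - 1)) / card diagonal_set \<le> star_discrepancy X"
  proof (rule star_discrepancy_ge_j_swap_into_faces[OF assms])
    show "finite (diagonal_set \<union> padding N)"
      by (simp add: finite_diagonal_set)
    show "x $ i1 = 1" if "x \<in> diagonal_set \<union> padding N - diagonal_set" for x
      using that padding_face by blast
  qed blast
  then show ?thesis
    using three_le_k by (simp add: card_diagonal_set)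
qed

theorem exists_local_not_global_min:
  assumes "2 * k \<le> n"
  shows "\<exists>(P :: (real ^ 'n) set) S. finite P \<and> P \<subseteq> unit_cube \<and> card P = n \<and>
           S \<subseteq> P \<and> card S = k \<and> local_min_SDSSP P k (k - 1) S \<and> \<not> global_min_SDSSP P k S"
proof -
  define P where "P = diagonal_set \<union> padding (n - k)"
  have P: "finite P" "P \<subseteq> unit_cube" "card P = n"
    using finite_diagonal_set diagonal_set_subset_unit_cube padding_subset_unit_cube
      diagonal_set_disjoint_padding assms
    by (auto simp: P_def card_Un_disjoint card_diagonal_set)
  have "{0, high_point} \<subseteq> diagonal_set"
    using origin_in_diagonal_set by (simp add: diagonal_set_def)
  moreover have "padding (k - 2) \<subseteq> padding (n - k)"
    using assms by (intro padding_mono) simp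
  ultimately have subsets: "diagonal_set \<subseteq> P" "better_diagonal_set \<subseteq> P"
    unfolding P_def better_diagonal_set_def by blast+
  show ?thesis
  proof (rule exists_local_not_global_minI[OF P subsets(1) card_diagonal_set _ subsets(2) card_better_diagonal_set])
    show "star_discrepancy diagonal_set \<le> star_discrepancy X" if "j_swap P diagonal_set (k - 1) X" for X
      using star_discrepancy_ge_diagonal_j_swap[of "n - k" X] that star_discrepancy_diagonal_set_le
      by (simp add: P_def)
    show "star_discrepancy better_diagonal_set < star_discrepancy diagonal_set"
      using star_discrepancy_better_diagonal_set_less star_discrepancy_diagonal_set_ge by linarith
  qed
qed

end

context diagonal_points
begin

abbreviation quarter_point :: "real ^ 'n" where
  "quarter_point \<equiv> vec (1/4)"

definition pair_set :: "(real ^ 'n) set" where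
  "pair_set = insert 0 (padding 1)"

definition pair_ground_set :: "nat \<Rightarrow> (real ^ 'n) set" where
  "pair_ground_set N = {0, quarter_point, high_point} \<union> padding N"

definition better_pair_set :: "(real ^ 'n) set" where
  "better_pair_set = {quarter_point, high_point}"

lemma card_pair_set: "card pair_set = 2"
  using vec_notin_padding[of 0] by (simp add: pair_set_def)

lemma card_better_pair_set: "card better_pair_set = 2"
  using three_quarters_le_c by (simp add: better_pair_set_def vec_eq_iff)

lemma card_pair_ground_set: "card (pair_ground_set N) = N + 3"
proof -
  have "{0, quarter_point, high_point} \<inter> padding N = {}"
    using vec_notin_padding[of 0] vec_notin_padding[of "1/4"] vec_notin_padding[OF c_less_1]
    by auto
  moreover have "card {0 :: real ^ 'n, quarter_point, high_point} = 3"
    using three_quarters_le_c by (simp add: vec_eq_iff)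
  moreover have "card (pair_ground_set N) = card {0 :: real ^ 'n, quarter_point, high_point} + card (padding N)"
    unfolding pair_ground_set_def using calculation(1) by (intro card_Un_disjoint) simp_all
  ultimately show ?thesis
    by simp
qed

lemma finite_pair_ground_set: "finite (pair_ground_set N)"
  by (simp add: pair_ground_set_def)

lemma pair_ground_set_subset_unit_cube: "pair_ground_set N \<subseteq> unit_cube"
  using high_point_in_unit_cube padding_subset_unit_cube
  by (auto simp: pair_ground_set_def unit_cube_def)

lemma star_discrepancy_pair_set: "star_discrepancy pair_set = 1/2"
proof (rule antisym)
  obtain x where x: "x \<in> padding 1"
    by (metis ex_in_conv padding_eq_empty_iff one_neq_zero)
  have "star_discrepancy pair_set \<le> max 0 (1 - 1 / card pair_set)"
  proof (rule star_discrepancy_le_face_point[of pair_set x i1])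
    show "finite pair_set" "x \<in> pair_set"
      using x by (simp_all add: pair_set_def)
    show "x $ i1 = 1"
      using x by (rule padding_face)
    show "box_volume q \<le> 0" if "q \<in> unit_cube" "pair_set \<inter> anchored_box q = {}" for q
    proof -
      have "0 \<notin> anchored_box q"
        using that(2) by (auto simp: pair_set_def)
      from box_volume_eq_0_if_origin_notin[OF that(1) this] show ?thesis
        by linarith
    qed
  qed
  then show "star_discrepancy pair_set \<le> 1/2"
    by (simp add: card_pair_set)
  have "0 \<in> pair_set" "finite pair_set"
    by (simp_all add: pair_set_def)
  from star_discrepancy_ge_origin[OF this(2,1)] show "1/2 \<le> star_discrepancy pair_set"
    by (simp add: card_pair_set)
qed

lemma star_discrepancy_ge_pair_j_swap:
  assumes "j_swap (pair_ground_set N) pair_set 1 X" "1 \<le> N"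
  shows "1/2 \<le> star_discrepancy X"
proof -
  have "pair_set \<subseteq> pair_ground_set N"
    using padding_mono[OF assms(2)] by (auto simp: pair_set_def pair_ground_set_def)
  note swap = j_swap_cards[OF assms(1) finite_pair_ground_set this]
  have finite_X: "finite X"
    using swap(1) finite_pair_ground_set by (rule finite_subset)
  have "X \<inter> pair_set \<noteq> {}"
    using swap(4) card_pair_set by auto
  then obtain x where x: "x \<in> X" "x = 0 \<or> x \<in> padding 1"
    by (auto simp: pair_set_def)
  then have "1 / card X \<le> star_discrepancy X"
    using star_discrepancy_ge_origin[OF finite_X] star_discrepancy_ge_face_point[OF finite_X _ padding_face]
    by blast
  then show ?thesis
    using swap(2) by (simp add: card_pair_set)
qed

lemma quarter_point_in_anchored_box_if_high_point_in:
  "high_point \<in> anchored_box q \<Longrightarrow> quarter_point \<in> anchored_box q"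
  using vec_in_anchored_box_if_high_point_in[of q "1/4"] three_quarters_le_c by simp

lemma better_pair_set_local_discrepancy:
  assumes q: "q \<in> unit_cube"
  shows "\<bar>box_fraction better_pair_set q - box_volume q\<bar>
    \<le> max (1/4) (max (1/2 - (1/4) ^ CARD('n)) (c - 1/2))"
proof -
  consider (high) "high_point \<in> anchored_box q"
    | (quarter) "high_point \<notin> anchored_box q" "quarter_point \<in> anchored_box q"
    | (none) "quarter_point \<notin> anchored_box q" "high_point \<notin> anchored_box q"
    using quarter_point_in_anchored_box_if_high_point_in by blast
  then show ?thesis
  proof cases
    case high
    then have "box_fraction better_pair_set q = 1"
      using quarter_point_in_anchored_box_if_high_point_in card_better_pair_set
      by (simp add: better_pair_set_def insert_absorb)
    then have "\<bar>box_fraction better_pair_set q - box_volume q\<bar> \<le> 1/4"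
      using box_volume_ge_if_high_point_in[OF high] box_volume_le_1[OF q]
      unfolding abs_le_iff by (intro conjI; linarith)
    then show ?thesis
      by (rule max.coboundedI1)
  next
    case quarter
    then have "box_fraction better_pair_set q = 1/2"
      using card_better_pair_set by (simp add: better_pair_set_def)
    moreover have "(1/4) ^ CARD('n) \<le> box_volume q"
      using box_volume_ge_if_vec_in[OF _ quarter(2)] by simp
    ultimately have "\<bar>box_fraction better_pair_set q - box_volume q\<bar> \<le> max (1/2 - (1/4) ^ CARD('n)) (c - 1/2)"
      using box_volume_le_if_high_point_notin[OF q quarter(1)]
      unfolding abs_le_iff by (intro conjI; linarith)
    then show ?thesis
      by (rule max.coboundedI2)
  next
    case none
    then have "box_fraction better_pair_set q = 0"
      by (simp add: better_pair_set_def)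
    then have "\<bar>box_fraction better_pair_set q - box_volume q\<bar> \<le> 1/4"
      using box_volume_le_if_vec_notin[OF q _ none(1)] box_volume_nonneg[OF q]
      unfolding abs_le_iff by (intro conjI; linarith)
    then show ?thesis
      by (rule max.coboundedI1)
  qed
qed

lemma star_discrepancy_better_pair_set_less: "star_discrepancy better_pair_set < 1/2"
proof -
  have "star_discrepancy better_pair_set \<le> max (1/4) (max (1/2 - (1/4) ^ CARD('n)) (c - 1/2))"
    using better_pair_set_local_discrepancy by (rule star_discrepancy_le)
  moreover have "0 < (1/4 :: real) ^ CARD('n)"
    by simp
  then have "max (1/4) (max (1/2 - (1/4) ^ CARD('n)) (c - 1/2)) < 1/2"
    using c_less_1 unfolding max_less_iff_conj by linarith
  ultimately show ?thesis
    by linarith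
qed

theorem exists_local_not_global_min_pair:
  assumes "4 \<le> n"
  shows "\<exists>(P :: (real ^ 'n) set) S. finite P \<and> P \<subseteq> unit_cube \<and> card P = n \<and>
           S \<subseteq> P \<and> card S = 2 \<and> local_min_SDSSP P 2 1 S \<and> \<not> global_min_SDSSP P 2 S"
proof -
  define N where "N = n - 3"
  have N: "1 \<le> N" "card (pair_ground_set N) = n"
    using assms by (simp_all add: N_def card_pair_ground_set)
  have subsets: "pair_set \<subseteq> pair_ground_set N" "better_pair_set \<subseteq> pair_ground_set N"
    using padding_mono[OF N(1)] unfolding pair_set_def better_pair_set_def pair_ground_set_def by blast+
  show ?thesis
  proof (rule exists_local_not_global_minI[OF finite_pair_ground_set pair_ground_set_subset_unit_cube N(2)
        subsets(1) card_pair_set _ subsets(2) card_better_pair_set])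
    show "star_discrepancy pair_set \<le> star_discrepancy X" if "j_swap (pair_ground_set N) pair_set 1 X" for X
      using star_discrepancy_ge_pair_j_swap[OF that N(1)] by (simp add: star_discrepancy_pair_set)
    show "star_discrepancy better_pair_set < star_discrepancy pair_set"
      using star_discrepancy_better_pair_set_less by (simp add: star_discrepancy_pair_set)
  qed
qed

end

theorem proposition1:
  fixes n k j :: nat
  assumes "CARD('n::finite) \<ge> 2"
    and "0 < n" and "0 < k" and "0 < j" and "k \<le> n"
    and "(n \<ge> 2 * k \<and> j < k) \<or> (n < 2 * k \<and> j < n - k)"
  shows "\<exists>(P :: (real ^ 'n) set) S. finite P \<and> P \<subseteq> unit_cube \<and> card P = n \<and>
           S \<subseteq> P \<and> card S = k \<and>
           local_min_SDSSP P k j S \<and> \<not> global_min_SDSSP P k S"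
proof -
  have "\<not> CARD('n) \<le> Suc 0"
    using assms(1) by simp
  then obtain i1 i2 :: 'n where "i1 \<noteq> i2"
    using card_le_Suc0_iff_eq[of "UNIV :: 'n set"] by auto
  consider (staircase) "j + 2 \<le> k" "k + j < n" | (pair) "k = 2" "j = 1" "4 \<le> n"
    | (diagonal) "3 \<le> k" "j = k - 1" "2 * k \<le> n"
    using assms(4,6) by linarith
  then show ?thesis
  proof cases
    case staircase
    interpret staircase_design i1 i2 k j
      using \<open>i1 \<noteq> i2\<close> staircase assms(4) by unfold_locales
    show ?thesis
      using exists_local_not_global_min staircase(2) .
  next
    case pair
    interpret diagonal_points i1 i2 "root CARD('n) (3/4)"
      using \<open>i1 \<noteq> i2\<close> by unfold_locales (simp_all add: real_root_pow_pos)
    show ?thesis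
      using exists_local_not_global_min_pair[OF pair(3)] pair(1,2) by simp
  next
    case diagonal
    interpret diagonal_design i1 i2 "root CARD('n) (3/4)" k
      using \<open>i1 \<noteq> i2\<close> diagonal(1) by unfold_locales (simp_all add: real_root_pow_pos)
    show ?thesis
      using exists_local_not_global_min[OF diagonal(3)] diagonal(2) by simp
  qed
qed

end
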